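(* Let $U$ be a countably infinite universe and let $\mathcal{C}=(L_1,L_2,\ldots)$ be a countable collection of languages over $U$. For every finite $n$, there exists an algorithm $\mathcal{A}$ that non-uniformly generates from $\mathcal{C}$, with generation times $t(L_1),t(L_2),\ldots$ (where $t(L_i)=t_{\mathcal{A}}(L_i)$), such that the following holds: every algorithm $\mathcal{G}$ with $t_{\mathcal{G}}(L_i)<t(L_i)$ for some $i\le n$ satisfies $t_{\mathcal{G}}(L_j)>t(L_j)$ for some other index $j\neq i$ with $j\le n$.
   Context: A language is an infinite subset of $U$. A collection $\mathcal{C}=(L_1,L_2,\ldots)$ is a sequence of languages; repetitions are allowed and entries are distinguished by their index. An enumeration of a language $L$ is a sequence $x_1,x_2,\ldots$ with $x_t\in L$ for all $t$ and such that every $x\in L$ equals $x_t$ for some finite $t$. A generating algorithm, at each time step $t\ge 1$, receives $x_1,\ldots,x_t$ and outputs a string $z_t\in U$. $S_t$ denotes the set of distinct strings among $x_1,\ldots,x_t$. An algorithm $\mathcal{G}$ non-uniformly generates from $\mathcal{C}$ if for every index $i$ there is a finite number $t(L_i)$ such that for every enumeration of $L_i$ presented to $\mathcal{G}$, $z_t\in L_i\setminus S_t$ for all $t$ with $|S_t|\ge t(L_i)$. The generation time $t_{\mathcal{G}}(L_i)$ of an algorithm $\mathcal{G}$ for $L_i$ is the least such number (and $\infty$ if none exists). *)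

theory Defs
  imports Main "HOL-Library.Extended_Nat" "HOL-Library.Countable"
begin

text \<open>A generating algorithm maps the finite prefix x_1,...,x_t (as a list, t >= 1)
  to its alg_output z_t.  An enumeration is a sequence x :: nat => 'u (x 0 plays the role of x_1).\<close>

type_synonym 'u algorithm = "'u list \<Rightarrow> 'u"

definition enumeration :: "'u set \<Rightarrow> (nat \<Rightarrow> 'u) \<Rightarrow> bool" where
  "enumeration L x \<longleftrightarrow> (\<forall>t. x t \<in> L) \<and> (\<forall>y\<in>L. \<exists>t. x t = y)"

definition S_set :: "(nat \<Rightarrow> 'u) \<Rightarrow> nat \<Rightarrow> 'u set" where
  "S_set x t = x ` {..<t}"

definition alg_output :: "'u algorithm \<Rightarrow> (nat \<Rightarrow> 'u) \<Rightarrow> nat \<Rightarrow> 'u" where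
  "alg_output G x t = G (map x [0..<t])"

definition gen_threshold :: "'u algorithm \<Rightarrow> 'u set \<Rightarrow> nat \<Rightarrow> bool" where
  "gen_threshold G L T \<longleftrightarrow>
     (\<forall>x. enumeration L x \<longrightarrow>
        (\<forall>t\<ge>1. card (S_set x t) \<ge> T \<longrightarrow> alg_output G x t \<in> L - S_set x t))"

definition gen_time :: "'u algorithm \<Rightarrow> 'u set \<Rightarrow> enat" where
  "gen_time G L = (if \<exists>T. gen_threshold G L T then enat (LEAST T. gen_threshold G L T) else \<infinity>)"

definition nonuniformly_generates :: "'u algorithm \<Rightarrow> (nat \<Rightarrow> 'u set) \<Rightarrow> bool" where
  "nonuniformly_generates G C \<longleftrightarrow> (\<forall>i. \<exists>T. gen_threshold G (C i) T)"

end

theory Submission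
  imports Defs
begin

(* Among the non-uniform generators choose one minimising the sum of its generation times on
   L_1, ..., L_n.  It is Pareto-optimal there, because every algorithm G can be patched into a
   non-uniform generator that is no slower than G on L_1, ..., L_n.  Having seen a set S, the patched
   algorithm outputs a fresh element of the intersection of all languages L_j containing S that are
   either among the first n with |S| past G's threshold for L_j, or have index at most |S| and every
   finite intersection of L_1, ..., L_j smaller than |S|; only when that intersection is exhausted
   does it defer to G.  For fixed i and |S| large, L_i belongs to the family and all members satisfy
   the second condition, so the intersection contains S, is therefore infinite, and a fresh element
   of L_i is produced. *)

lemma S_set_eq_set_prefix: "S_set x t = set (map x [0..<t])"
  unfolding S_set_def by (auto simp: atLeast0LessThan)

lemma S_set_subset: "enumeration L x \<Longrightarrow> S_set x t \<subseteq> L"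
  unfolding enumeration_def S_set_def by auto

lemma gen_time_le_threshold: "gen_threshold G L T \<Longrightarrow> gen_time G L \<le> enat T"
  unfolding gen_time_def by (auto intro: Least_le)

lemma gen_threshold_the_gen_time:
  "gen_time G L \<noteq> \<infinity> \<Longrightarrow> gen_threshold G L (the_enat (gen_time G L))"
  unfolding gen_time_def by (auto split: if_splits intro: LeastI_ex)

lemma nonuniformly_generates_gen_time_finite:
  "nonuniformly_generates G C \<Longrightarrow> gen_time G (C i) \<noteq> \<infinity>"
  unfolding nonuniformly_generates_def using gen_time_le_threshold
  by (metis infinity_ileE)

definition small_intersections :: "(nat \<Rightarrow> 'u set) \<Rightarrow> nat \<Rightarrow> nat \<Rightarrow> bool" where
  "small_intersections C m s \<longleftrightarrow>
     (\<forall>F \<subseteq> {..m}. finite (\<Inter>j\<in>F. C j) \<longrightarrow> card (\<Inter>j\<in>F. C j) < s)"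

lemma small_intersections_antimono:
  "small_intersections C m s \<Longrightarrow> k \<le> m \<Longrightarrow> small_intersections C k s"
  unfolding small_intersections_def by (meson atMost_subset_iff order_trans)

lemma eventually_small_intersections: "\<exists>s0. \<forall>s\<ge>s0. small_intersections C m s"
proof -
  define s0 where "s0 = Suc (\<Sum>F\<in>Pow {..m}. card (\<Inter>j\<in>F. C j))"
  have "card (\<Inter>j\<in>F. C j) < s0" if "F \<subseteq> {..m}" for F
  proof -
    have "card (\<Inter>j\<in>F. C j) \<le> (\<Sum>F\<in>Pow {..m}. card (\<Inter>j\<in>F. C j))"
      by (rule member_le_sum) (use that in auto)
    then show ?thesis unfolding s0_def by linarith
  qed
  then have "small_intersections C m s" if "s \<ge> s0" for s
    unfolding small_intersections_def using that less_le_trans by blast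
  then show ?thesis by blast
qed

lemma infinite_Inter_if_small_intersections:
  assumes "finite F" "F \<noteq> {}"
    and small: "\<And>j. j \<in> F \<Longrightarrow> small_intersections C j (card S)"
    and sub: "\<And>j. j \<in> F \<Longrightarrow> S \<subseteq> C j"
  shows "infinite (\<Inter>j\<in>F. C j)"
proof
  assume fin: "finite (\<Inter>j\<in>F. C j)"
  have "small_intersections C (Max F) (card S)"
    using assms(1,2) by (intro small Max_in)
  moreover have "F \<subseteq> {..Max F}"
    using assms(1) by auto
  ultimately have "card (\<Inter>j\<in>F. C j) < card S"
    using fin unfolding small_intersections_def by blast
  moreover have "card S \<le> card (\<Inter>j\<in>F. C j)"
    using fin sub by (intro card_mono) auto
  ultimately show False by simp
qed

definition admissible_indices :: "(nat \<Rightarrow> 'u set) \<Rightarrow> nat \<Rightarrow> (nat \<Rightarrow> nat) \<Rightarrow> 'u set \<Rightarrow> nat set" where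
  "admissible_indices C n T S = {j. S \<subseteq> C j \<and>
     (j \<le> card S \<and> small_intersections C j (card S) \<or> j < n \<and> T j \<le> card S)}"

definition fresh_candidates :: "(nat \<Rightarrow> 'u set) \<Rightarrow> nat \<Rightarrow> (nat \<Rightarrow> nat) \<Rightarrow> 'u set \<Rightarrow> 'u set" where
  "fresh_candidates C n T S = (\<Inter>j\<in>admissible_indices C n T S. C j) - S"

definition patched_generator ::
    "(nat \<Rightarrow> 'u set) \<Rightarrow> nat \<Rightarrow> (nat \<Rightarrow> nat) \<Rightarrow> 'u algorithm \<Rightarrow> 'u algorithm" where
  "patched_generator C n T G xs =
     (if fresh_candidates C n T (set xs) = {} then G xs
      else SOME y. y \<in> fresh_candidates C n T (set xs))"

lemma patched_generator_in_fresh_candidates: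
  "fresh_candidates C n T (set xs) \<noteq> {} \<Longrightarrow>
     patched_generator C n T G xs \<in> fresh_candidates C n T (set xs)"
  unfolding patched_generator_def by (auto intro: someI_ex)

lemma gen_threshold_patched_generator_keep:
  assumes "j < n" and thr: "gen_threshold G (C j) (T j)"
  shows "gen_threshold (patched_generator C n T G) (C j) (T j)"
  unfolding gen_threshold_def
proof (intro allI impI)
  fix x t assume en: "enumeration (C j) x" and "1 \<le> t" and large: "T j \<le> card (S_set x t)"
  let ?xs = "map x [0..<t]"
  show "alg_output (patched_generator C n T G) x t \<in> C j - S_set x t"
  proof (cases "fresh_candidates C n T (set ?xs) = {}")
    case True
    then have "alg_output (patched_generator C n T G) x t = alg_output G x t"
      unfolding alg_output_def patched_generator_def by simp
    with thr en \<open>1 \<le> t\<close> large show ?thesis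
      unfolding gen_threshold_def by simp
  next
    case False
    have "j \<in> admissible_indices C n T (S_set x t)"
      unfolding admissible_indices_def using \<open>j < n\<close> large S_set_subset[OF en] by auto
    then have "fresh_candidates C n T (S_set x t) \<subseteq> C j - S_set x t"
      unfolding fresh_candidates_def by auto
    moreover have "patched_generator C n T G ?xs \<in> fresh_candidates C n T (set ?xs)"
      using False by (rule patched_generator_in_fresh_candidates)
    ultimately show ?thesis
      unfolding alg_output_def S_set_eq_set_prefix by blast
  qed
qed

lemma gen_threshold_patched_generator: "\<exists>N. gen_threshold (patched_generator C n T G) (C i) N"
proof -
  obtain s0 where s0: "\<And>s. s \<ge> s0 \<Longrightarrow> small_intersections C (max i n) s"
    using eventually_small_intersections by blast
  have "gen_threshold (patched_generator C n T G) (C i) (max s0 (max i n))"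
    unfolding gen_threshold_def
  proof (intro allI impI)
    fix x t assume en: "enumeration (C i) x" and "1 \<le> t"
      and large: "max s0 (max i n) \<le> card (S_set x t)"
    define S where "S = S_set x t"
    define F where "F = admissible_indices C n T S"
    have small: "small_intersections C j (card S)" if "j \<in> F" for j
    proof (cases "j < n")
      case True
      then show ?thesis
        using s0 large small_intersections_antimono unfolding S_def by fastforce
    next
      case False
      with that show ?thesis unfolding F_def admissible_indices_def by auto
    qed
    have "F \<subseteq> {..card S}"
      using large unfolding F_def admissible_indices_def S_def by auto
    then have "finite F" by (rule finite_subset) simp
    have "i \<in> F"
      using large small_intersections_antimono[OF s0] S_set_subset[OF en]
      unfolding F_def admissible_indices_def S_def by auto
    have "S \<subseteq> C j" if "j \<in> F" for j
      using that unfolding F_def admissible_indices_def by blast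
    with \<open>finite F\<close> \<open>i \<in> F\<close> small have "infinite (\<Inter>j\<in>F. C j)"
      by (intro infinite_Inter_if_small_intersections) auto
    moreover have "finite S" unfolding S_def S_set_def by simp
    ultimately have "fresh_candidates C n T S \<noteq> {}"
      unfolding fresh_candidates_def F_def[symmetric] by (metis Diff_infinite_finite finite.emptyI)
    then have "alg_output (patched_generator C n T G) x t \<in> fresh_candidates C n T S"
      unfolding alg_output_def S_def S_set_eq_set_prefix
      by (rule patched_generator_in_fresh_candidates)
    moreover have "fresh_candidates C n T S \<subseteq> C i - S"
      using \<open>i \<in> F\<close> unfolding fresh_candidates_def F_def by auto
    ultimately show "alg_output (patched_generator C n T G) x t \<in> C i - S_set x t"
      unfolding S_def by blast
  qed
  then show ?thesis by blast
qed

lemma nonuniformly_generates_patched_generator: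
  "nonuniformly_generates (patched_generator C n T G) C"
  unfolding nonuniformly_generates_def using gen_threshold_patched_generator by blast

lemma ex_nonuniform_generator_dominating:
  assumes "\<And>j. j < n \<Longrightarrow> gen_time G (C j) \<noteq> \<infinity>"
  shows "\<exists>A. nonuniformly_generates A C \<and> (\<forall>j<n. gen_time A (C j) \<le> gen_time G (C j))"
proof -
  define T where "T j = the_enat (gen_time G (C j))" for j
  define A where "A = patched_generator C n T G"
  have "gen_time A (C j) \<le> gen_time G (C j)" if "j < n" for j
  proof -
    have "gen_threshold A (C j) (T j)"
      unfolding A_def T_def
      by (intro gen_threshold_patched_generator_keep gen_threshold_the_gen_time assms that)
    then have "gen_time A (C j) \<le> enat (T j)" by (rule gen_time_le_threshold)
    also have "enat (T j) = gen_time G (C j)"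
      unfolding T_def using assms[OF that] by auto
    finally show ?thesis .
  qed
  then show ?thesis
    unfolding A_def using nonuniformly_generates_patched_generator by blast
qed

lemma ex_pareto_minimal:
  fixes f :: "'a \<Rightarrow> nat \<Rightarrow> enat"
  assumes "P a" and finite_values: "\<And>a j. P a \<Longrightarrow> j < n \<Longrightarrow> f a j \<noteq> \<infinity>"
  shows "\<exists>a. P a \<and> (\<forall>b. P b \<and> (\<forall>j<n. f b j \<le> f a j) \<longrightarrow> (\<forall>j<n. f b j = f a j))"
proof -
  define cost where "cost a = (\<Sum>j<n. the_enat (f a j))" for a
  obtain a where "P a" and least: "\<And>b. P b \<Longrightarrow> cost a \<le> cost b"
    using ex_has_least_nat[of P a cost] \<open>P a\<close> by blast
  have "\<forall>j<n. f b j = f a j" if "P b" and le: "\<forall>j<n. f b j \<le> f a j" for b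
  proof (rule ccontr)
    assume "\<not> (\<forall>j<n. f b j = f a j)"
    then obtain i where "i < n" and "f b i < f a i"
      using le by (auto simp: order.order_iff_strict)
    have the_enat_le: "the_enat (f b j) \<le> the_enat (f a j)" if "j < n" for j
      using le finite_values[OF \<open>P a\<close> that] finite_values[OF \<open>P b\<close> that] that by auto
    have "the_enat (f b i) < the_enat (f a i)"
      using \<open>f b i < f a i\<close> finite_values[OF \<open>P a\<close> \<open>i < n\<close>]
        finite_values[OF \<open>P b\<close> \<open>i < n\<close>] by auto
    then have "cost b < cost a"
      unfolding cost_def using the_enat_le \<open>i < n\<close> by (intro sum_strict_mono_ex1) auto
    with least[OF \<open>P b\<close>] show False by simp
  qed
  with \<open>P a\<close> show ?thesis by blast
qed

theorem mainTheorem1: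
  fixes C :: "nat \<Rightarrow> ('u::countable) set" and n :: nat
  assumes "infinite (UNIV :: 'u set)"
    and "\<And>i. infinite (C i)"
  shows "\<exists>A. nonuniformly_generates A C \<and>
           (\<forall>G i. i < n \<and> gen_time G (C i) < gen_time A (C i) \<longrightarrow>
              (\<exists>j<n. j \<noteq> i \<and> gen_time G (C j) > gen_time A (C j)))"
proof -
  obtain A0 where "nonuniformly_generates A0 C"
    using ex_nonuniform_generator_dominating[of 0] by blast
  then have "\<exists>A. nonuniformly_generates A C \<and> (\<forall>B. nonuniformly_generates B C \<and>
      (\<forall>j<n. gen_time B (C j) \<le> gen_time A (C j)) \<longrightarrow> (\<forall>j<n. gen_time B (C j) = gen_time A (C j)))"
    by (rule ex_pareto_minimal[where f = "\<lambda>A j. gen_time A (C j)"])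
      (rule nonuniformly_generates_gen_time_finite)
  then obtain A where A: "nonuniformly_generates A C"
    and pareto: "\<And>B. nonuniformly_generates B C \<Longrightarrow> \<forall>j<n. gen_time B (C j) \<le> gen_time A (C j)
                   \<Longrightarrow> \<forall>j<n. gen_time B (C j) = gen_time A (C j)"
    by blast
  have "\<exists>j<n. j \<noteq> i \<and> gen_time G (C j) > gen_time A (C j)"
    if "i < n" and faster: "gen_time G (C i) < gen_time A (C i)" for G i
  proof (rule ccontr)
    assume "\<not> ?thesis"
    with faster have G_le_A: "\<forall>j<n. gen_time G (C j) \<le> gen_time A (C j)"
      by (metis less_imp_le not_le)
    then have "\<forall>j<n. gen_time G (C j) \<noteq> \<infinity>"
      using nonuniformly_generates_gen_time_finite[OF A] by (metis enat_ord_simps(5))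
    then obtain B where B: "nonuniformly_generates B C"
      and B_le_G: "\<forall>j<n. gen_time B (C j) \<le> gen_time G (C j)"
      using ex_nonuniform_generator_dominating by blast
    from pareto[OF B] B_le_G G_le_A have "gen_time B (C i) = gen_time A (C i)"
      using order_trans \<open>i < n\<close> by blast
    with B_le_G faster \<open>i < n\<close> show False by (metis leD order.strict_trans2)
  qed
  with A show ?thesis by blast
qed

end
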